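(* Define the linear functions $H_1,H_2,H_3,H_4:\mathbb{R}^3\to\mathbb{R}$ by $H_1(x)=x_1-x_2-x_3$, $H_2(x)=x_1-x_2+x_3$, $H_3(x)=x_1+x_2-x_3$, $H_4(x)=x_1+x_2+x_3$, and the sets $C_1^0=\{x\in\mathbb{R}^3: H_1(x)>0,\,H_2(x)>0,\,H_3(x)>0,\,H_4(x)>0\}\cup\{0\}$, $C_2^0=\{x\in\mathbb{R}^3: H_1(x)<0,\,H_2(x)<0,\,H_3(x)>0,\,H_4(x)>0\}\cup\{0\}$, $C_3^0=\{x\in\mathbb{R}^3: H_1(x)<0,\,H_2(x)>0,\,H_3(x)<0,\,H_4(x)>0\}\cup\{0\}$. Then the cones $C_1^0,C_2^0,C_3^0$ are cotransverse.
   Context: A subset $X\subseteq\mathbb{R}^3$ is a cone if $x\in X$ and $\lambda\ge 0$ imply $\lambda x\in X$. The convex hull of a set $X$ is $\mathrm{conv}\,X=\{\sum_{i=1}^n\lambda_i x_i: x_i\in X,\ n\in\mathbb{N},\ \lambda_i\ge0,\ \sum_i\lambda_i=1\}$; the convex hull of several cones means the convex hull of their union. Two cones $C,D$ are transverse if $C\cup(-C)$ and $D\cup(-D)$ intersect only in $\{0\}$. Three cones $C_1,C_2,C_3$ are cotransverse if the origin is a vertex of the convex hull of $C_1,C_2,C_3$ and, for every $\{i,j,k\}=\{1,2,3\}$, the cone $C_i$ and the convex hull of the cones $C_j,C_k$ are transverse. *)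

theory Defs
  imports "HOL-Analysis.Analysis"
begin

definition is_cone :: "(real^3) set \<Rightarrow> bool" where
  "is_cone X \<longleftrightarrow> (\<forall>x\<in>X. \<forall>t::real. t \<ge> 0 \<longrightarrow> t *\<^sub>R x \<in> X)"

definition transverse :: "(real^3) set \<Rightarrow> (real^3) set \<Rightarrow> bool" where
  "transverse C D \<longleftrightarrow> (C \<union> uminus ` C) \<inter> (D \<union> uminus ` D) \<subseteq> {0}"

text \<open>The origin being a vertex of a convex set is rendered as the origin being an
  extreme point of it.\<close>
definition cotransverse :: "(real^3) set \<Rightarrow> (real^3) set \<Rightarrow> (real^3) set \<Rightarrow> bool" where
  "cotransverse C1 C2 C3 \<longleftrightarrow>
     0 extreme_point_of (convex hull (C1 \<union> C2 \<union> C3)) \<and>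
     transverse C1 (convex hull (C2 \<union> C3)) \<and>
     transverse C2 (convex hull (C1 \<union> C3)) \<and>
     transverse C3 (convex hull (C1 \<union> C2))"

definition H1 :: "real^3 \<Rightarrow> real" where "H1 x = x$1 - x$2 - x$3"
definition H2 :: "real^3 \<Rightarrow> real" where "H2 x = x$1 - x$2 + x$3"
definition H3 :: "real^3 \<Rightarrow> real" where "H3 x = x$1 + x$2 - x$3"
definition H4 :: "real^3 \<Rightarrow> real" where "H4 x = x$1 + x$2 + x$3"

definition C1_0 :: "(real^3) set" where
  "C1_0 = {x. H1 x > 0 \<and> H2 x > 0 \<and> H3 x > 0 \<and> H4 x > 0} \<union> {0}"
definition C2_0 :: "(real^3) set" where
  "C2_0 = {x. H1 x < 0 \<and> H2 x < 0 \<and> H3 x > 0 \<and> H4 x > 0} \<union> {0}"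
definition C3_0 :: "(real^3) set" where
  "C3_0 = {x. H1 x < 0 \<and> H2 x > 0 \<and> H3 x < 0 \<and> H4 x > 0} \<union> {0}"

end

theory Submission
  imports Defs
begin

text \<open>Apart from the origin, all three cones lie in the half-space \<open>H4 > 0\<close>, so the origin is
  an exposed, hence extreme, point of their convex hull. For \<open>C\<^sub>i\<close> and the hull of the other
  two cones, \<open>H\<^sub>i\<close> separates: up to a global sign, \<open>C\<^sub>i\<close> lies in \<open>{H\<^sub>i > 0, H4 > 0} \<union> {0}\<close>
  and the other two cones in \<open>{H\<^sub>i < 0, H4 > 0} \<union> {0}\<close>, a convex set that therefore contains
  their hull. A nonzero common point of \<open>C \<union> -C\<close> and \<open>D \<union> -D\<close> would violate the sign condition
  on \<open>H\<^sub>i\<close> (both points in \<open>C\<close> and \<open>D\<close>, or both reflected) or on \<open>H4\<close> (exactly one reflected).\<close>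

definition pointed_open_cone :: "('a::real_vector \<Rightarrow> real) set \<Rightarrow> 'a set" where
  "pointed_open_cone F = {x. \<forall>f\<in>F. 0 < f x} \<union> {0}"

lemma scaleR_mem_pointed_open_cone:
  assumes "\<And>f. f \<in> F \<Longrightarrow> linear f" and "x \<in> pointed_open_cone F" and "0 \<le> t"
  shows "t *\<^sub>R x \<in> pointed_open_cone F"
  using assms by (cases "t = 0") (auto simp: pointed_open_cone_def linear_scale)

lemma convex_pointed_open_cone:
  assumes linear: "\<And>f. f \<in> F \<Longrightarrow> linear f"
  shows "convex (pointed_open_cone F)"
  unfolding convex_alt
proof (intro ballI allI impI)
  fix x y :: 'a and u :: real
  assume x: "x \<in> pointed_open_cone F" and y: "y \<in> pointed_open_cone F"
    and "0 \<le> u \<and> u \<le> 1"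
  then have u: "0 \<le> u" "u \<le> 1" by auto
  consider "x = 0" | "y = 0" | "x \<noteq> 0" "y \<noteq> 0" by blast
  then show "(1 - u) *\<^sub>R x + u *\<^sub>R y \<in> pointed_open_cone F"
  proof cases
    case 1
    then show ?thesis using scaleR_mem_pointed_open_cone[OF linear y u(1)] by simp
  next
    case 2
    then show ?thesis using scaleR_mem_pointed_open_cone[OF linear x, of "1 - u"] u by simp
  next
    case 3
    have "0 < f ((1 - u) *\<^sub>R x + u *\<^sub>R y)" if "f \<in> F" for f
    proof -
      have "0 < f x" "0 < f y"
        using 3 x y that by (auto simp: pointed_open_cone_def)
      then have "0 < (1 - u) * f x + u * f y"
        using u by (cases "u = 0") (auto intro: add_nonneg_pos)
      then show ?thesis
        using linear[OF that] by (simp add: linear_add linear_scale)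
    qed
    then show ?thesis by (simp add: pointed_open_cone_def)
  qed
qed

lemma convex_hull_subset_pointed_open_cone:
  assumes "\<And>f. f \<in> F \<Longrightarrow> linear f" and "S \<subseteq> pointed_open_cone F"
  shows "convex hull S \<subseteq> pointed_open_cone F"
  using assms(2) convex_pointed_open_cone[OF assms(1)] by (rule hull_minimal)

lemma zero_extreme_point_of_pointed_open_cone:
  assumes "linear h" and "convex K" and "0 \<in> K" and "K \<subseteq> pointed_open_cone {h}"
  shows "0 extreme_point_of K"
proof -
  have "K - {0} = K \<inter> h -` {0<..}"
    using assms(4) linear_0[OF assms(1)] by (auto simp: pointed_open_cone_def)
  moreover have "convex (K \<inter> h -` {0<..})"
    by (intro convex_Int assms(2) convex_linear_vimage[OF assms(1)] convex_real_interval)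
  ultimately show ?thesis
    using assms(2,3) by (simp add: extreme_point_of_stillconvex)
qed

lemma transverse_pointed_open_cones:
  assumes "linear f" and "linear g"
    and "C \<subseteq> pointed_open_cone {f, g}" and "D \<subseteq> pointed_open_cone {- f, g}"
  shows "transverse C D"
  unfolding transverse_def
proof
  fix z assume z: "z \<in> (C \<union> uminus ` C) \<inter> (D \<union> uminus ` D)"
  have C: "0 < f x \<and> 0 < g x" if "x \<in> C" "x \<noteq> 0" for x
    using that assms(3) by (auto simp: pointed_open_cone_def)
  have D: "f x < 0 \<and> 0 < g x" if "x \<in> D" "x \<noteq> 0" for x
    using that assms(4) by (auto simp: pointed_open_cone_def)
  have "f (- z) = - f z" "g (- z) = - g z"
    using assms(1,2) by (simp_all add: linear_neg)
  then show "z \<in> {0}"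
    using z C D by fastforce
qed

lemma linear_H1: "linear H1" and linear_H2: "linear H2"
  and linear_H3: "linear H3" and linear_H4: "linear H4"
  by (auto intro!: linearI simp: H1_def H2_def H3_def H4_def algebra_simps)

lemmas linear_H = linear_H1 linear_H2 linear_H3 linear_H4

theorem lemma1:
  shows "cotransverse C1_0 C2_0 C3_0"
proof -
  note cone_defs = pointed_open_cone_def C1_0_def C2_0_def C3_0_def H1_def H2_def H3_def H4_def
  have linear_neg: "linear (- f)" if "linear f" for f :: "real^3 \<Rightarrow> real"
    using linear_compose_neg[OF that] by (simp add: fun_Compl_def)
  have "convex hull (C1_0 \<union> C2_0 \<union> C3_0) \<subseteq> pointed_open_cone {H4}"
    by (rule convex_hull_subset_pointed_open_cone) (auto simp: linear_H cone_defs)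
  then have "0 extreme_point_of (convex hull (C1_0 \<union> C2_0 \<union> C3_0))"
    by (intro zero_extreme_point_of_pointed_open_cone[OF linear_H4 convex_convex_hull] hull_inc)
       (simp_all add: C1_0_def)
  moreover have "convex hull (C2_0 \<union> C3_0) \<subseteq> pointed_open_cone {- H1, H4}"
    by (rule convex_hull_subset_pointed_open_cone) (auto simp: linear_H linear_neg cone_defs)
  then have "transverse C1_0 (convex hull (C2_0 \<union> C3_0))"
    by (rule transverse_pointed_open_cones[OF linear_H1 linear_H4, rotated]) (auto simp: cone_defs)
  moreover have "convex hull (C1_0 \<union> C3_0) \<subseteq> pointed_open_cone {H2, H4}"
    by (rule convex_hull_subset_pointed_open_cone) (auto simp: linear_H cone_defs)
  then have "transverse C2_0 (convex hull (C1_0 \<union> C3_0))"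
    by (intro transverse_pointed_open_cones[OF linear_neg[OF linear_H2] linear_H4]) (auto simp: cone_defs)
  moreover have "convex hull (C1_0 \<union> C2_0) \<subseteq> pointed_open_cone {H3, H4}"
    by (rule convex_hull_subset_pointed_open_cone) (auto simp: linear_H cone_defs)
  then have "transverse C3_0 (convex hull (C1_0 \<union> C2_0))"
    by (intro transverse_pointed_open_cones[OF linear_neg[OF linear_H3] linear_H4]) (auto simp: cone_defs)
  ultimately show ?thesis
    unfolding cotransverse_def by blast
qed

end
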